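(* In the two-tier residency matching game described in the context, suppose $v>\frac{e}{e-1}$, doctors submit lists of length $K\ge 1$, and in the symmetric equilibrium low-tier doctors send at least one application to low-tier hospitals. Then, under the large market approximation, the social welfare of this equilibrium is not less than the social welfare of SIMPLE.
   Context: Model: there are $n$ high-tier and $rn$ low-tier doctors ($r>0$), and $n$ high-tier and $rn$ low-tier hospitals, each with one position. Every hospital prefers every high doctor to every low doctor and every doctor prefers every high hospital to every low hospital; within a tier, preferences are independent uniformly random permutations. Each doctor submits a ranked list of exactly $K$ hospitals: a strategy $(k,K-k)$ lists his $k$ most preferred high hospitals followed by his $K-k$ most preferred low hospitals. Hospitals submit full true rankings; doctor-proposing deferred acceptance is run. Values: a doctor gets $v>1$ if matched to a high hospital, $1$ if matched to a low one, $0$ if unmatched; a hospital gets $v$ from a high doctor, $1$ from a low doctor, $0$ if unfilled; social welfare is the sum of all agents' values. Large market approximation: $n\to\infty$ with $r,K,v$ fixed; each application is accepted independently with a probability determined by the aggregate strategy profile via fixed-point equations (expected matched doctors = expected hospitals receiving at least one admissible application; a hospital receiving on average $\lambda$ applications gets none with probability $e^{-\lambda}$; low doctors' applications to hospitals already taken by high doctors are rejected). Equilibrium: symmetric Nash equilibrium (all doctors of a tier use the same, possibly mixed, strategy, each maximizing expected value given the acceptance probabilities). SIMPLE: the outcome when every doctor submits a single application to his most preferred hospital in his own tier; its welfare is $2(v+r)n(1-1/e)$. *)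

theory Defs
  imports Complex_Main
begin

text \<open>All quantities are
  normalised per n (the number of high-tier doctors); total quantities are n times them.
  A mixed strategy of a tier is a probability vector alpha over k in {0..K}, where
  alpha k is the probability of playing strategy (k, K-k).\<close>

definition mixed :: "nat \<Rightarrow> (nat \<Rightarrow> real) \<Rightarrow> bool" where
  "mixed K \<alpha> \<longleftrightarrow> (\<forall>k. 0 \<le> \<alpha> k) \<and> (\<Sum>k\<le>K. \<alpha> k) = 1"

text \<open>Expected number of applications actually sent (processed by deferred acceptance)
  by a doctor with k applications in a tier, each accepted independently with prob. p.\<close>
definition napps :: "nat \<Rightarrow> real \<Rightarrow> real" where
  "napps k p = (\<Sum>j<k. (1 - p) ^ j)"

text \<open>Acceptance probability of an admissible application when each hospital receives on
  average lam admissible applications (Poisson): (1 - exp(-lam))/lam, and 1 if lam = 0.\<close>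
definition acc :: "real \<Rightarrow> real" where
  "acc lam = (if lam = 0 then 1 else (1 - exp (- lam)) / lam)"

text \<open>Expected value of a doctor playing (k, K-k), with acceptance probabilities p (own
  applications to high hospitals) and q (own applications to low hospitals).\<close>
definition util :: "real \<Rightarrow> nat \<Rightarrow> real \<Rightarrow> real \<Rightarrow> nat \<Rightarrow> real" where
  "util v K p q k = v * (1 - (1 - p) ^ k) + (1 - p) ^ k * (1 - (1 - q) ^ (K - k))"

definition matchprob :: "nat \<Rightarrow> real \<Rightarrow> real \<Rightarrow> nat \<Rightarrow> real" where
  "matchprob K p q k = (1 - (1 - p) ^ k) + (1 - p) ^ k * (1 - (1 - q) ^ (K - k))"

text \<open>Fixed-point equations of the large market approximation.
  a: high doctor -> high hospital; b: high doctor -> low hospital;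
  c: low doctor -> high hospital; d: low doctor -> low hospital.
  Low doctors' applications to hospitals already taken by high doctors are rejected;
  hfree / lfree are the fractions of high / low hospitals not taken by high doctors.\<close>
definition fixed_point :: "real \<Rightarrow> nat \<Rightarrow> (nat \<Rightarrow> real) \<Rightarrow> (nat \<Rightarrow> real)
    \<Rightarrow> real \<Rightarrow> real \<Rightarrow> real \<Rightarrow> real \<Rightarrow> bool" where
  "fixed_point r K \<alpha> \<beta> a b c d \<longleftrightarrow>
     (let hfree = 1 - (\<Sum>k\<le>K. \<alpha> k * (1 - (1 - a) ^ k));
          lfree = 1 - (\<Sum>k\<le>K. \<alpha> k * (1 - a) ^ k * (1 - (1 - b) ^ (K - k))) / r
      in 0 \<le> a \<and> a \<le> 1 \<and> 0 \<le> b \<and> b \<le> 1 \<and> 0 \<le> c \<and> c \<le> 1 \<and> 0 \<le> d \<and> d \<le> 1 \<and>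
         a = acc (\<Sum>k\<le>K. \<alpha> k * napps k a) \<and>
         b = acc ((\<Sum>k\<le>K. \<alpha> k * (1 - a) ^ k * napps (K - k) b) / r) \<and>
         c = hfree * acc (r * (\<Sum>k\<le>K. \<beta> k * napps k c)) \<and>
         d = lfree * acc (\<Sum>k\<le>K. \<beta> k * (1 - c) ^ k * napps (K - k) d))"

definition equilibrium :: "real \<Rightarrow> real \<Rightarrow> nat \<Rightarrow> (nat \<Rightarrow> real) \<Rightarrow> (nat \<Rightarrow> real)
    \<Rightarrow> real \<Rightarrow> real \<Rightarrow> real \<Rightarrow> real \<Rightarrow> bool" where
  "equilibrium r v K \<alpha> \<beta> a b c d \<longleftrightarrow>
     mixed K \<alpha> \<and> mixed K \<beta> \<and> fixed_point r K \<alpha> \<beta> a b c d \<and>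
     (\<forall>k\<le>K. 0 < \<alpha> k \<longrightarrow> (\<forall>k'\<le>K. util v K a b k' \<le> util v K a b k)) \<and>
     (\<forall>k\<le>K. 0 < \<beta> k \<longrightarrow> (\<forall>k'\<le>K. util v K c d k' \<le> util v K c d k))"

text \<open>Social welfare (sum of all doctors' and hospitals' values) in the large market
  approximation with n high-tier doctors (and r n low-tier doctors).
  A hospital gets v from a matched high doctor and 1 from a matched low doctor.\<close>
definition welfare :: "nat \<Rightarrow> real \<Rightarrow> real \<Rightarrow> nat \<Rightarrow> (nat \<Rightarrow> real) \<Rightarrow> (nat \<Rightarrow> real)
    \<Rightarrow> real \<Rightarrow> real \<Rightarrow> real \<Rightarrow> real \<Rightarrow> real" where
  "welfare n r v K \<alpha> \<beta> a b c d = real n *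
     ((\<Sum>k\<le>K. \<alpha> k * util v K a b k) + r * (\<Sum>k\<le>K. \<beta> k * util v K c d k)
      + v * (\<Sum>k\<le>K. \<alpha> k * matchprob K a b k)
      + r * (\<Sum>k\<le>K. \<beta> k * matchprob K c d k))"

text \<open>Welfare of SIMPLE (every doctor applies only to his favourite hospital of his own tier).\<close>
definition simple_welfare :: "nat \<Rightarrow> real \<Rightarrow> real \<Rightarrow> real" where
  "simple_welfare n r v = 2 * (v + r) * real n * (1 - exp (-1))"

end

theory Submission
  imports Defs "HOL-Analysis.Convex"
begin

text \<open>Welfare counts every match twice, once for the doctor and once for the hospital, so
  it suffices that a fraction at least 1 - 1/e of the high hospitals are filled by high doctors
  and that the low hospitals see a mass at least r (1 - 1/e) of matches. A hospital receiving
  on average x applications is filled with probability 1 - exp(-x), which is at least 1 - 1/e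
  when x \<ge> 1, while for x \<le> 1 each application is accepted with probability
  (1 - exp(-x))/x \<ge> 1 - 1/e. On the high side the load x < 1 is impossible: applications would
  then be accepted so easily that, as v (1 - 1/e) > 1, no high doctor would skip the high tier.
  On the low side every low doctor keeps a low application, so each is matched with probability
  at least the acceptance probability of low hospitals.\<close>

definition matched_high :: "nat \<Rightarrow> (nat \<Rightarrow> real) \<Rightarrow> real \<Rightarrow> real" where
  "matched_high K \<alpha> p = (\<Sum>k\<le>K. \<alpha> k * (1 - (1 - p) ^ k))"

definition matched_low :: "nat \<Rightarrow> (nat \<Rightarrow> real) \<Rightarrow> real \<Rightarrow> real \<Rightarrow> real" where
  "matched_low K \<alpha> p q = (\<Sum>k\<le>K. \<alpha> k * (1 - p) ^ k * (1 - (1 - q) ^ (K - k)))"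

lemma one_minus_power_eq_napps: "1 - (1 - p) ^ m = p * napps m p"
proof (induction m)
  case (Suc m)
  have "1 - (1 - p) ^ Suc m = (1 - (1 - p) ^ m) + p * (1 - p) ^ m"
    by (simp add: algebra_simps)
  with Suc show ?case by (simp add: napps_def algebra_simps)
qed (simp add: napps_def)

lemma napps_nonneg: "0 \<le> p \<Longrightarrow> p \<le> 1 \<Longrightarrow> 0 \<le> napps m p"
  unfolding napps_def by (intro sum_nonneg) simp

lemma one_le_napps:
  assumes "1 \<le> m" "0 \<le> p" "p \<le> 1"
  shows "1 \<le> napps m p"
proof -
  have "(\<Sum>j\<in>{0}. (1 - p) ^ j) \<le> (\<Sum>j<m. (1 - p) ^ j)"
    using assms by (intro sum_mono2) auto
  then show ?thesis by (simp add: napps_def)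
qed

lemma acc_mult_self: "acc x * x = 1 - exp (- x)"
  unfolding acc_def by auto

lemma one_minus_exp_ge_linear:
  fixes x :: real
  assumes "0 \<le> x" "x \<le> 1"
  shows "x * (1 - exp (- 1)) \<le> 1 - exp (- x)"
proof -
  have "exp ((1 - x) *\<^sub>R 0 + x *\<^sub>R (- 1)) \<le> (1 - x) * exp 0 + x * exp (- 1)"
    using convex_onD[OF exp_convex, of x 0 "- 1"] assms by simp
  then show ?thesis by (simp add: algebra_simps)
qed

lemma acc_ge_one_minus_exp_neg_one:
  fixes x :: real
  assumes "0 \<le> x" "x \<le> 1"
  shows "1 - exp (- 1) \<le> acc x"
  using one_minus_exp_ge_linear[OF assms] assms by (auto simp: acc_def field_simps)

lemma matched_high_eq_napps: "matched_high K \<alpha> p = p * (\<Sum>k\<le>K. \<alpha> k * napps k p)"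
  unfolding matched_high_def sum_distrib_left
  by (intro sum.cong refl) (simp add: one_minus_power_eq_napps)

lemma matched_low_eq_napps:
  "matched_low K \<alpha> p q = q * (\<Sum>k\<le>K. \<alpha> k * (1 - p) ^ k * napps (K - k) q)"
  unfolding matched_low_def sum_distrib_left
  by (intro sum.cong refl) (simp add: one_minus_power_eq_napps)

lemma matched_high_nonneg:
  "mixed K \<alpha> \<Longrightarrow> 0 \<le> p \<Longrightarrow> p \<le> 1 \<Longrightarrow> 0 \<le> matched_high K \<alpha> p"
  unfolding matched_high_def mixed_def
  by (intro sum_nonneg mult_nonneg_nonneg) (auto simp: power_le_one)

lemma matched_low_nonneg:
  "mixed K \<alpha> \<Longrightarrow> 0 \<le> p \<Longrightarrow> p \<le> 1 \<Longrightarrow> 0 \<le> q \<Longrightarrow> q \<le> 1 \<Longrightarrow> 0 \<le> matched_low K \<alpha> p q"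
  unfolding matched_low_def mixed_def
  by (intro sum_nonneg mult_nonneg_nonneg) (auto simp: power_le_one)

lemma sum_util_eq:
  "(\<Sum>k\<le>K. \<alpha> k * util v K p q k) = v * matched_high K \<alpha> p + matched_low K \<alpha> p q"
  unfolding matched_high_def matched_low_def util_def
  by (simp add: sum.distrib[symmetric] sum_distrib_left algebra_simps)

lemma sum_matchprob_eq:
  "(\<Sum>k\<le>K. \<alpha> k * matchprob K p q k) = matched_high K \<alpha> p + matched_low K \<alpha> p q"
  unfolding matched_high_def matched_low_def matchprob_def
  by (simp add: sum.distrib[symmetric] algebra_simps)

lemma welfare_eq_matched:
  "welfare n r v K \<alpha> \<beta> a b c d = real n *
     (2 * v * matched_high K \<alpha> a + 2 * (matched_low K \<alpha> a b + r * matched_high K \<beta> c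
        + r * matched_low K \<beta> c d) + (v - 1) * (matched_low K \<alpha> a b + r * matched_high K \<beta> c))"
  unfolding welfare_def sum_util_eq sum_matchprob_eq by (simp add: algebra_simps)

lemma one_less_of_one_less_mult:
  fixes v s :: real
  assumes "1 < v * s" "0 \<le> s" "s \<le> 1"
  shows "1 < v"
proof (rule ccontr)
  assume "\<not> 1 < v"
  then have "v * s \<le> 1 * s" using assms(2) by (intro mult_right_mono) auto
  then show False using assms by simp
qed

lemma util_zero_less_util_one:
  assumes v: "v * (1 - exp (- 1)) > 1" and a: "1 - exp (- 1) \<le> a" "a \<le> 1"
    and b: "0 \<le> b" "b \<le> 1" and K: "1 \<le> K"
  shows "util v K a b 0 < util v K a b 1"
proof -
  define q :: real where "q = exp (- 1)"
  define Y where "Y = (1 - b) ^ (K - 1)"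
  have Y: "0 \<le> Y" "Y \<le> 1" unfolding Y_def using b by (auto simp: power_le_one)
  have q: "0 < q" "q < 1" unfolding q_def by auto
  have "v > 1" using one_less_of_one_less_mult v q by simp
  have gain: "util v K a b 1 - util v K a b 0 = a * (v - 1 + Y) - b * Y"
    unfolding util_def Y_def using K by (simp add: power_eq_if algebra_simps)
  have "(1 - q) * (v - 1 + Y) \<le> a * (v - 1 + Y)"
    using a \<open>v > 1\<close> Y by (intro mult_right_mono) (auto simp: q_def)
  moreover have "(1 - q) * (1 - Y) \<le> 1 - Y" "b * Y \<le> Y"
    using q Y b by (auto simp: mult_left_le_one_le)
  ultimately show ?thesis
    using gain v unfolding q_def[symmetric] by (simp add: algebra_simps)
qed

lemma one_le_sum_napps:
  assumes "mixed K \<alpha>" "\<alpha> 0 = 0" "0 \<le> p" "p \<le> 1"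
  shows "1 \<le> (\<Sum>k\<le>K. \<alpha> k * napps k p)"
proof -
  have "\<alpha> k \<le> \<alpha> k * napps k p" for k
  proof (cases "k = 0")
    case False
    then have "1 \<le> napps k p" using assms by (intro one_le_napps) auto
    then show ?thesis using assms(1) mult_left_mono[of 1 "napps k p" "\<alpha> k"] by (simp add: mixed_def)
  qed (simp add: assms(2))
  then have "(\<Sum>k\<le>K. \<alpha> k) \<le> (\<Sum>k\<le>K. \<alpha> k * napps k p)" by (intro sum_mono)
  then show ?thesis using assms(1) by (simp add: mixed_def)
qed

lemma high_tier_matched_ge:
  assumes v: "v * (1 - exp (- 1)) > 1" and K: "1 \<le> K" and \<alpha>: "mixed K \<alpha>"
    and a: "0 \<le> a" "a \<le> 1" and b: "0 \<le> b" "b \<le> 1"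
    and a_eq: "a = acc (\<Sum>k\<le>K. \<alpha> k * napps k a)"
    and best: "\<forall>k\<le>K. 0 < \<alpha> k \<longrightarrow> (\<forall>k'\<le>K. util v K a b k' \<le> util v K a b k)"
  shows "1 - exp (- 1) \<le> matched_high K \<alpha> a"
proof -
  define lam where "lam = (\<Sum>k\<le>K. \<alpha> k * napps k a)"
  have lam_ge: "1 \<le> lam"
  proof (rule ccontr)
    assume "\<not> 1 \<le> lam"
    moreover have "0 \<le> lam" unfolding lam_def
      using \<alpha> a by (intro sum_nonneg mult_nonneg_nonneg napps_nonneg) (auto simp: mixed_def)
    moreover have "a = acc lam" unfolding lam_def by (rule a_eq)
    ultimately have "1 - exp (- 1) \<le> a" using acc_ge_one_minus_exp_neg_one[of lam] by simp
    then have "util v K a b 0 < util v K a b 1"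
      using util_zero_less_util_one v a b K by blast
    then have "\<not> 0 < \<alpha> 0" using best K by fastforce
    then have "\<alpha> 0 = 0" using \<alpha> unfolding mixed_def by (intro antisym) auto
    then show False using one_le_sum_napps \<alpha> a \<open>\<not> 1 \<le> lam\<close> lam_def by blast
  qed
  have "matched_high K \<alpha> a = 1 - exp (- lam)"
    using matched_high_eq_napps a_eq acc_mult_self lam_def by (metis mult.commute)
  then show ?thesis using lam_ge by simp
qed

lemma low_acceptance_le_sum_matchprob:
  assumes \<beta>: "mixed K \<beta>" and supp: "\<forall>k\<le>K. 0 < \<beta> k \<longrightarrow> k < K"
    and c: "0 \<le> c" "c \<le> 1" and d: "0 \<le> d" "d \<le> 1"
  shows "d \<le> (\<Sum>k\<le>K. \<beta> k * matchprob K c d k)"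
proof -
  have "\<beta> k * d \<le> \<beta> k * matchprob K c d k" if k: "k \<le> K" for k
  proof (cases "\<beta> k = 0")
    case False
    then obtain m where m: "K - k = Suc m"
      using supp k \<beta> by (metis Suc_diff_Suc mixed_def order_less_le)
    have "(1 - c) ^ k * ((1 - d) * (1 - d) ^ m) \<le> (1 - d) * (1 - d) ^ m"
      using c d by (intro mult_left_le_one_le) (auto simp: power_le_one)
    also have "\<dots> \<le> 1 - d"
      using d by (intro mult_right_le_one_le) (auto simp: power_le_one)
    finally have "(1 - c) ^ k * ((1 - d) * (1 - d) ^ m) \<le> 1 - d" .
    then have "d \<le> matchprob K c d k" unfolding matchprob_def m by (simp add: algebra_simps)
    then show ?thesis using \<beta> by (simp add: mixed_def mult_left_mono)
  qed simp
  then have "(\<Sum>k\<le>K. \<beta> k * d) \<le> (\<Sum>k\<le>K. \<beta> k * matchprob K c d k)" by (intro sum_mono) simp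
  then show ?thesis using \<beta> by (simp add: mixed_def sum_distrib_right[symmetric])
qed

text \<open>A low hospital is taken by a high doctor with probability 1 - exp(-\<mu>) and is otherwise
  left to the low doctors, each of whom finds a free low hospital with probability at least
  exp(-\<mu>) (1 - 1/e).\<close>

lemma low_tier_matched_ge:
  assumes r: "0 < r" and \<alpha>: "mixed K \<alpha>" and \<beta>: "mixed K \<beta>"
    and fp: "fixed_point r K \<alpha> \<beta> a b c d"
    and supp: "\<forall>k\<le>K. 0 < \<beta> k \<longrightarrow> k < K"
  shows "r * (1 - exp (- 1)) \<le> matched_low K \<alpha> a b + r * (matched_high K \<beta> c + matched_low K \<beta> c d)"
proof -
  have a: "0 \<le> a" "a \<le> 1" and b: "0 \<le> b" "b \<le> 1" and c: "0 \<le> c" "c \<le> 1"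
    and d: "0 \<le> d" "d \<le> 1"
    and b_fp: "b = acc ((\<Sum>k\<le>K. \<alpha> k * (1 - a) ^ k * napps (K - k) b) / r)"
    and d_fp: "d = (1 - (\<Sum>k\<le>K. \<alpha> k * (1 - a) ^ k * (1 - (1 - b) ^ (K - k))) / r)
                 * acc (\<Sum>k\<le>K. \<beta> k * (1 - c) ^ k * napps (K - k) d)"
    using fp unfolding fixed_point_def Let_def by blast+
  define \<mu> where "\<mu> = (\<Sum>k\<le>K. \<alpha> k * (1 - a) ^ k * napps (K - k) b) / r"
  define \<nu> where "\<nu> = (\<Sum>k\<le>K. \<beta> k * (1 - c) ^ k * napps (K - k) d)"
  have b_eq: "b = acc \<mu>" unfolding \<mu>_def by (rule b_fp)
  have d_eq: "d = (1 - matched_low K \<alpha> a b / r) * acc \<nu>"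
    unfolding \<nu>_def matched_low_def by (rule d_fp)
  have "0 \<le> \<mu>" unfolding \<mu>_def using \<alpha> a b r
    by (intro divide_nonneg_nonneg sum_nonneg mult_nonneg_nonneg napps_nonneg) (auto simp: mixed_def)
  have "0 \<le> \<nu>" unfolding \<nu>_def using \<beta> c d
    by (intro sum_nonneg mult_nonneg_nonneg napps_nonneg) (auto simp: mixed_def)
  have "matched_low K \<alpha> a b = r * (b * \<mu>)"
    using r by (simp add: matched_low_eq_napps \<mu>_def)
  then have "matched_low K \<alpha> a b = r * (acc \<mu> * \<mu>)" using b_eq by simp
  then have high_taken: "matched_low K \<alpha> a b = r * (1 - exp (- \<mu>))" by (simp only: acc_mult_self)
  then have d_free: "d = exp (- \<mu>) * acc \<nu>" using d_eq r by simp
  have "matched_low K \<beta> c d = d * \<nu>" by (simp add: matched_low_eq_napps \<nu>_def)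
  also have "\<dots> = exp (- \<mu>) * (acc \<nu> * \<nu>)" using d_free by simp
  finally have low_by_low: "matched_low K \<beta> c d = exp (- \<mu>) * (1 - exp (- \<nu>))"
    by (simp only: acc_mult_self)
  have low_matched: "exp (- \<mu>) * (1 - exp (- 1)) \<le> matched_high K \<beta> c + matched_low K \<beta> c d"
  proof (cases "\<nu> \<le> 1")
    case True
    then have "exp (- \<mu>) * (1 - exp (- 1)) \<le> d"
      using acc_ge_one_minus_exp_neg_one[of \<nu>] \<open>0 \<le> \<nu>\<close> d_free by (simp add: mult_left_mono)
    also have "\<dots> \<le> matched_high K \<beta> c + matched_low K \<beta> c d"
      using low_acceptance_le_sum_matchprob[OF \<beta> supp c d] by (simp add: sum_matchprob_eq)
    finally show ?thesis .
  next
    case False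
    then have "exp (- \<mu>) * (1 - exp (- 1)) \<le> matched_low K \<beta> c d"
      using low_by_low by (simp add: mult_left_mono)
    then show ?thesis using matched_high_nonneg[OF \<beta> c] by simp
  qed
  have "r * (exp (- \<mu>) * exp (- 1)) \<le> r * exp (- 1)"
    using r \<open>0 \<le> \<mu>\<close> by (simp add: mult_left_le_one_le)
  moreover have "r * (1 - exp (- 1)) = r * (1 - exp (- \<mu>)) + r * (exp (- \<mu>) * (1 - exp (- 1)))
      + (r * (exp (- \<mu>) * exp (- 1)) - r * exp (- 1))"
    by (simp add: algebra_simps)
  ultimately show ?thesis using high_taken mult_left_mono[OF low_matched, of r] r by linarith
qed

theorem lemma5:
  fixes n K :: nat and r v a b c d :: real and \<alpha> \<beta> :: "nat \<Rightarrow> real"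
  assumes "0 < r"
    and "v > exp 1 / (exp 1 - 1)"
    and "1 \<le> K"
    and "equilibrium r v K \<alpha> \<beta> a b c d"
    and "\<forall>k\<le>K. 0 < \<beta> k \<longrightarrow> k < K"
  shows "welfare n r v K \<alpha> \<beta> a b c d \<ge> simple_welfare n r v"
proof -
  have v: "v * (1 - exp (- 1)) > 1"
    using assms(2) by (simp add: exp_minus field_simps)
  then have "v > 1" using one_less_of_one_less_mult by simp
  from assms(4) have \<alpha>: "mixed K \<alpha>" and \<beta>: "mixed K \<beta>"
    and fp: "fixed_point r K \<alpha> \<beta> a b c d"
    and best: "\<forall>k\<le>K. 0 < \<alpha> k \<longrightarrow> (\<forall>k'\<le>K. util v K a b k' \<le> util v K a b k)"
    unfolding equilibrium_def by auto
  have a: "0 \<le> a" "a \<le> 1" and b: "0 \<le> b" "b \<le> 1" and c: "0 \<le> c" "c \<le> 1"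
    and a_eq: "a = acc (\<Sum>k\<le>K. \<alpha> k * napps k a)"
    using fp unfolding fixed_point_def Let_def by auto
  have high: "1 - exp (- 1) \<le> matched_high K \<alpha> a"
    using high_tier_matched_ge[OF v assms(3) \<alpha> a b a_eq best] .
  have low: "r * (1 - exp (- 1)) \<le> matched_low K \<alpha> a b + r * (matched_high K \<beta> c + matched_low K \<beta> c d)"
    using low_tier_matched_ge[OF assms(1) \<alpha> \<beta> fp assms(5)] .
  have "0 \<le> (v - 1) * (matched_low K \<alpha> a b + r * matched_high K \<beta> c)"
    using \<open>v > 1\<close> assms(1) matched_low_nonneg[OF \<alpha> a b] matched_high_nonneg[OF \<beta> c] by simp
  moreover have "2 * v * (1 - exp (- 1)) \<le> 2 * v * matched_high K \<alpha> a"
    using high \<open>v > 1\<close> by simp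
  ultimately have "2 * (v + r) * (1 - exp (- 1)) \<le> 2 * v * matched_high K \<alpha> a
      + 2 * (matched_low K \<alpha> a b + r * matched_high K \<beta> c + r * matched_low K \<beta> c d)
      + (v - 1) * (matched_low K \<alpha> a b + r * matched_high K \<beta> c)"
    using low by (simp add: algebra_simps)
  then show ?thesis unfolding welfare_eq_matched simple_welfare_def
    by (simp add: mult_left_mono mult.commute mult.left_commute)
qed

end
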